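(* Fix $\lambda>0$ and Lipschitz functions $\phi,\phi_1,\phi_2:\mathbb R\to\mathbb R$ bounded from below. Then $\mathcal M^\lambda\phi$ is $L_l$-Lipschitz and $$\mathcal M^\lambda\phi(x)=-\lambda\log\mathbb E_{\zeta\sim\Phi_x}\big[e^{-(\phi(x+\zeta)+l(\zeta))/\lambda}\big],\quad x\in\mathbb R.$$ Moreover, there exist $\kappa_1,\kappa_2>0$ such that, with $\delta_t:=2\kappa_1e^{-\kappa_2t^2}$, for each $x\in\mathbb R$ the probability measure $\mu_x$ defined by $\frac{d\mu_x}{d\Phi_x}(\xi)\propto e^{-(\phi(x+\xi)+l(\xi))/\lambda}$ satisfies $\mathbb P(|x+\xi|>t)\le\delta_t$ for all $t\ge0$ when $\xi\sim\mu_x$, and $$\mathcal M^\lambda\phi(x)=\mathbb E_{\xi\sim\mu_x}[\phi(x+\xi)+l(\xi)]+\lambda D_{KL}(\mu_x\|\Phi_x).$$ Furthermore, for every $R>0$ there is $\mathscr E_R>0$ with $\lim_{R\to\infty}\mathscr E_R=0$ such that $\|\mathcal M^\lambda\phi_1-\mathcal M^\lambda\phi_2\|_{L^\infty(\mathbb R)}\le\|\phi_1-\phi_2\|_{L^\infty([-R,R])}+\mathscr E_R$.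
   Context: Let $l:\mathbb R\to\mathbb R$ satisfy: there is $K>0$ with $\inf l=l(0)=K$ and $l(x)+l(y)\ge l(x+y)+K$ for all $x,y$; $l(\xi)\to+\infty$ as $|\xi|\to\infty$; $l$ is $L_l$-Lipschitz for some $L_l>0$. For $x\in\mathbb R$, $\Phi_x=\mathcal N(-x,1)$. For $\lambda>0$ and $\phi$ bounded below, $\mathcal M^\lambda\phi(x)=\inf\{\int_{\mathbb R}(\phi(x+\xi)+l(\xi))\mu(d\xi)+\lambda D_{KL}(\mu\|\Phi_x)\}$, infimum over probability measures $\mu\ll\Phi_x$, with $D_{KL}(\mu\|\Phi_x)=\int\frac{d\mu}{d\Phi_x}\log\frac{d\mu}{d\Phi_x}\,d\Phi_x$. *)

theory Defs
  imports "HOL-Probability.Probability"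
begin

definition Phi :: "real \<Rightarrow> real measure" where
  "Phi x = density lborel (normal_density (-x) 1)"

text \<open>Extended-real integral, used only for integrands bounded below on probability
  spaces: equals the Lebesgue integral when integrable and +infinity otherwise.\<close>
definition ext_int :: "real measure \<Rightarrow> (real \<Rightarrow> real) \<Rightarrow> ereal" where
  "ext_int M g = (if integrable M g then ereal (integral\<^sup>L M g) else \<infinity>)"

definition KL_div :: "real measure \<Rightarrow> real measure \<Rightarrow> ereal" where
  "KL_div mu nu = ext_int nu
     (\<lambda>\<xi>. enn2real (RN_deriv nu mu \<xi>) * ln (enn2real (RN_deriv nu mu \<xi>)))"

definition admissible :: "real \<Rightarrow> real measure set" where
  "admissible x = {mu. prob_space mu \<and> sets mu = sets borel \<and> absolutely_continuous (Phi x) mu}"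

definition objective ::
  "(real \<Rightarrow> real) \<Rightarrow> real \<Rightarrow> (real \<Rightarrow> real) \<Rightarrow> real \<Rightarrow> real measure \<Rightarrow> ereal" where
  "objective l lam \<phi> x mu =
     ext_int mu (\<lambda>\<xi>. \<phi> (x + \<xi>) + l \<xi>) + ereal lam * KL_div mu (Phi x)"

definition Mop :: "(real \<Rightarrow> real) \<Rightarrow> real \<Rightarrow> (real \<Rightarrow> real) \<Rightarrow> real \<Rightarrow> ereal" where
  "Mop l lam \<phi> x = (INF mu \<in> admissible x. objective l lam \<phi> x mu)"

definition gibbs_weight :: "(real \<Rightarrow> real) \<Rightarrow> real \<Rightarrow> (real \<Rightarrow> real) \<Rightarrow> real \<Rightarrow> real \<Rightarrow> real" where
  "gibbs_weight l lam \<phi> x \<xi> = exp (- (\<phi> (x + \<xi>) + l \<xi>) / lam)"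

definition mu_opt :: "(real \<Rightarrow> real) \<Rightarrow> real \<Rightarrow> (real \<Rightarrow> real) \<Rightarrow> real \<Rightarrow> real measure" where
  "mu_opt l lam \<phi> x = density (Phi x)
     (\<lambda>\<xi>. ennreal (gibbs_weight l lam \<phi> x \<xi> / integral\<^sup>L (Phi x) (gibbs_weight l lam \<phi> x)))"

end

theory Submission
  imports Defs "HOL-Real_Asymp.Real_Asymp"
begin

text \<open>
  For a probability measure N and a potential h bounded below, the Donsker--Varadhan
  inequality  -lam log (int exp(-h/lam) dN) \<le> int h dmu + lam KL(mu || N)  holds for every
  mu absolutely continuous w.r.t. N, with equality for the Gibbs measure with density
  proportional to exp(-h/lam).  Applied to N = Phi x and h = phi(x + .) + l, this gives the closed form of M^lam phi and shows that
  mu_x is a minimiser.  After the substitution z = x + xi the partition function becomes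
  Z(x) = int exp(-(phi z + l(z - x))/lam) dPhi_0(z), so the Lipschitz bound on l gives
  Z(y) \<le> Z(x) exp(L_l |x - y|/lam), i.e. -lam log Z is L_l-Lipschitz.  The Gibbs weight is
  bounded above on {|z| > t} by  C exp(-t^2/8) exp(3 z^2/8), which is integrable against the
  standard normal law, and below by  c exp(-b |z|); this gives the Gaussian tail of mu_x.
  Finally, if phi_1 \<le> phi_2 + D on [-R, R], then  Z_1 \<ge> exp(-D/lam) Z_2 (1 - mu_x(|x + xi| > R)),
  and the tail bound turns this into the stability estimate with an error of order exp(-R^2/8).
\<close>

lemma (in prob_space) integral_pos:
  fixes f :: "'a \<Rightarrow> real"
  assumes "integrable M f" and "\<And>x. f x > 0"
  shows "integral\<^sup>L M f > 0"
proof -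
  have "integral\<^sup>L M f \<noteq> 0"
  proof
    assume "integral\<^sup>L M f = 0"
    then have "AE x in M. f x = 0"
      using integral_nonneg_eq_0_iff_AE[OF assms(1)] assms(2) by (simp add: less_imp_le)
    then show False using assms(2) by (simp add: less_le)
  qed
  moreover have "integral\<^sup>L M f \<ge> 0" using assms(2) by (simp add: less_imp_le)
  ultimately show ?thesis by simp
qed

lemma mult_ln_diff_le:
  fixes f g :: real
  assumes "0 \<le> f" and "0 < g"
  shows "f * (ln g - ln f) \<le> g - f"
proof (cases "f = 0")
  case False
  then have "f > 0" using assms(1) by simp
  have "ln (g / f) \<le> g / f - 1" using \<open>f > 0\<close> assms(2) by (intro ln_le_minus_one) simp
  then have "f * ln (g / f) \<le> f * (g / f - 1)" using \<open>f > 0\<close> by (intro mult_left_mono) auto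
  moreover have "f * ln (g / f) = f * (ln g - ln f)" using \<open>f > 0\<close> assms(2) by (simp add: ln_div)
  moreover have "f * (g / f - 1) = g - f" using \<open>f > 0\<close> by (simp add: field_simps)
  ultimately show ?thesis by simp
qed (use assms in simp)

lemma abs_exp_neg_div_mult_le:
  fixes lam c t :: real
  assumes "lam > 0" and "c \<le> t"
  shows "\<bar>exp (- t / lam) * t\<bar> \<le> lam + \<bar>c\<bar> * exp (\<bar>c\<bar> / lam)"
proof (cases "t \<ge> 0")
  case True
  have "t / lam \<le> exp (t / lam)" using exp_ge_add_one_self[of "t / lam"] by linarith
  then have "exp (- t / lam) * t \<le> lam" using assms(1) by (simp add: exp_minus field_simps)
  then have "\<bar>exp (- t / lam) * t\<bar> \<le> lam" using True by simp
  then show ?thesis by (simp add: add_increasing2)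
next
  case False
  then have t_le: "\<bar>t\<bar> \<le> \<bar>c\<bar>" using assms(2) by simp
  then have "- t / lam \<le> \<bar>c\<bar> / lam" using assms(1) by (intro divide_right_mono) auto
  then have "exp (- t / lam) \<le> exp (\<bar>c\<bar> / lam)" by simp
  with t_le have "\<bar>exp (- t / lam) * t\<bar> \<le> \<bar>c\<bar> * exp (\<bar>c\<bar> / lam)"
    by (simp add: abs_mult mult_mono' mult.commute)
  then show ?thesis using assms(1) by simp
qed

definition gibbs_measure :: "real measure \<Rightarrow> real \<Rightarrow> (real \<Rightarrow> real) \<Rightarrow> real measure" where
  "gibbs_measure N lam h = density N
     (\<lambda>\<xi>. ennreal (exp (- h \<xi> / lam) / integral\<^sup>L N (\<lambda>\<xi>. exp (- h \<xi> / lam))))"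

locale gibbs_potential = prob_space N for N :: "real measure" +
  fixes lam c :: real and h :: "real \<Rightarrow> real"
  assumes lam_pos: "lam > 0"
    and h_measurable[measurable]: "h \<in> borel_measurable N"
    and h_lower: "\<And>\<xi>. c \<le> h \<xi>"
begin

definition partition :: real where
  "partition = integral\<^sup>L N (\<lambda>\<xi>. exp (- h \<xi> / lam))"

definition gibbs_density :: "real \<Rightarrow> real" where
  "gibbs_density \<xi> = exp (- h \<xi> / lam) / partition"

lemma integrable_exp: "integrable N (\<lambda>\<xi>. exp (- h \<xi> / lam))"
proof (rule integrable_const_bound[where B = "exp (- c / lam)"])
  show "AE \<xi> in N. norm (exp (- h \<xi> / lam)) \<le> exp (- c / lam)"
    using h_lower lam_pos by (auto simp: divide_right_mono)
qed simp

lemma partition_pos: "partition > 0"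
  unfolding partition_def by (rule integral_pos[OF integrable_exp]) simp

lemma gibbs_density_measurable[measurable]: "gibbs_density \<in> borel_measurable N"
  unfolding gibbs_density_def by simp

lemma gibbs_density_pos: "gibbs_density \<xi> > 0"
  unfolding gibbs_density_def using partition_pos by simp

lemma ln_gibbs_density: "ln (gibbs_density \<xi>) = - h \<xi> / lam - ln partition"
  unfolding gibbs_density_def using partition_pos by (simp add: ln_div)

lemma integrable_gibbs_density: "integrable N gibbs_density"
  unfolding gibbs_density_def using integrable_exp by simp

lemma integral_gibbs_density: "integral\<^sup>L N gibbs_density = 1"
  unfolding gibbs_density_def using partition_pos by (simp add: partition_def)

lemma free_energy_le_density_objective:
  assumes f_nonneg: "\<And>\<xi>. 0 \<le> f \<xi>" and int_f: "integrable N f" and f_one: "integral\<^sup>L N f = 1"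
    and int_h: "integrable N (\<lambda>\<xi>. f \<xi> * h \<xi>)"
    and int_flnf: "integrable N (\<lambda>\<xi>. f \<xi> * ln (f \<xi>))"
  shows "- lam * ln partition
    \<le> integral\<^sup>L N (\<lambda>\<xi>. f \<xi> * h \<xi>) + lam * integral\<^sup>L N (\<lambda>\<xi>. f \<xi> * ln (f \<xi>))"
proof -
  \<comment> \<open>Gibbs' inequality against the density of the Gibbs measure, pointwise\<close>
  have pointwise: "lam * f \<xi> - lam * gibbs_density \<xi> - lam * ln partition * f \<xi>
      \<le> f \<xi> * h \<xi> + lam * (f \<xi> * ln (f \<xi>))" for \<xi>
  proof -
    have "f \<xi> * (ln (gibbs_density \<xi>) - ln (f \<xi>)) \<le> gibbs_density \<xi> - f \<xi>"
      by (rule mult_ln_diff_le[OF f_nonneg gibbs_density_pos])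
    then have "lam * (f \<xi> * (ln (gibbs_density \<xi>) - ln (f \<xi>))) \<le> lam * (gibbs_density \<xi> - f \<xi>)"
      using lam_pos by (intro mult_left_mono) auto
    moreover have "lam * (f \<xi> * (ln (gibbs_density \<xi>) - ln (f \<xi>)))
        = - f \<xi> * h \<xi> - lam * ln partition * f \<xi> - lam * (f \<xi> * ln (f \<xi>))"
      unfolding ln_gibbs_density using lam_pos by (simp add: field_simps)
    ultimately show ?thesis by (simp add: algebra_simps)
  qed
  have "- lam * ln partition
      = integral\<^sup>L N (\<lambda>\<xi>. lam * f \<xi> - lam * gibbs_density \<xi> - lam * ln partition * f \<xi>)"
    using int_f f_one integrable_gibbs_density integral_gibbs_density by simp
  also have "\<dots> \<le> integral\<^sup>L N (\<lambda>\<xi>. f \<xi> * h \<xi> + lam * (f \<xi> * ln (f \<xi>)))"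
    by (rule integral_mono) (use int_f int_h int_flnf integrable_gibbs_density pointwise in auto)
  also have "\<dots> = integral\<^sup>L N (\<lambda>\<xi>. f \<xi> * h \<xi>) + lam * integral\<^sup>L N (\<lambda>\<xi>. f \<xi> * ln (f \<xi>))"
    using int_h int_flnf by simp
  finally show ?thesis .
qed

lemma free_energy_le_objective:
  assumes mu: "prob_space mu" "sets mu = sets N" "absolutely_continuous N mu"
  shows "ereal (- lam * ln partition) \<le> ext_int mu h + ereal lam * KL_div mu N"
proof -
  interpret mu: prob_space mu by fact
  define f where "f \<xi> = enn2real (RN_deriv N mu \<xi>)" for \<xi>
  have f_nonneg: "0 \<le> f \<xi>" for \<xi> unfolding f_def by simp
  have f_measurable[measurable]: "f \<in> borel_measurable N" unfolding f_def by simp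
  have "AE \<xi> in N. RN_deriv N mu \<xi> \<noteq> \<infinity>"
    by (rule RN_deriv_finite) (use mu mu.sigma_finite_measure_axioms in auto)
  then have "density N (RN_deriv N mu) = density N (\<lambda>\<xi>. ennreal (f \<xi>))"
    unfolding f_def by (intro density_cong) (auto simp: top.not_eq_extremum)
  then have mu_eq: "mu = density N (\<lambda>\<xi>. ennreal (f \<xi>))"
    using density_RN_deriv mu by simp
  have integral_mu: "integral\<^sup>L mu g = integral\<^sup>L N (\<lambda>\<xi>. f \<xi> * g \<xi>)"
    if "g \<in> borel_measurable N" for g
    using that f_nonneg unfolding mu_eq by (subst integral_density) auto
  have integrable_mu: "integrable mu g \<longleftrightarrow> integrable N (\<lambda>\<xi>. f \<xi> * g \<xi>)"
    if "g \<in> borel_measurable N" for g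
    using that f_nonneg unfolding mu_eq by (subst integrable_density) auto
  have KL_eq: "KL_div mu N = ext_int N (\<lambda>\<xi>. f \<xi> * ln (f \<xi>))"
    unfolding KL_div_def f_def ..
  show ?thesis
  proof (cases "integrable mu h \<and> integrable N (\<lambda>\<xi>. f \<xi> * ln (f \<xi>))")
    case True
    moreover have "integrable N f" "integral\<^sup>L N f = 1"
      using integrable_mu[of "\<lambda>_. 1"] integral_mu[of "\<lambda>_. 1"] mu.prob_space by simp_all
    ultimately show ?thesis
      using free_energy_le_density_objective[OF f_nonneg] integrable_mu[of h] integral_mu[of h]
      unfolding KL_eq ext_int_def by simp
  next
    case False
    then have "ext_int mu h = \<infinity> \<or> KL_div mu N = \<infinity>"
      unfolding KL_eq ext_int_def by auto
    moreover have "ext_int mu h \<noteq> -\<infinity>" "KL_div mu N \<noteq> -\<infinity>"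
      unfolding KL_div_def ext_int_def by auto
    ultimately have objective_infinite: "ext_int mu h + ereal lam * KL_div mu N = \<infinity>"
      using lam_pos by (cases "ext_int mu h"; cases "KL_div mu N") auto
    show ?thesis unfolding objective_infinite by simp
  qed
qed

lemma gibbs_measure_eq: "gibbs_measure N lam h = density N (\<lambda>\<xi>. ennreal (gibbs_density \<xi>))"
  unfolding gibbs_measure_def gibbs_density_def partition_def ..

lemma sets_gibbs_measure: "sets (gibbs_measure N lam h) = sets N"
  unfolding gibbs_measure_eq by simp

lemma absolutely_continuous_gibbs_measure: "absolutely_continuous N (gibbs_measure N lam h)"
  unfolding gibbs_measure_eq by (rule absolutely_continuousI_density) (simp add: gibbs_density_def)

lemma prob_space_gibbs_measure: "prob_space (gibbs_measure N lam h)"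
proof (rule prob_spaceI)
  have "emeasure (gibbs_measure N lam h) (space N) = ennreal (integral\<^sup>L N gibbs_density)"
    unfolding gibbs_measure_eq using integrable_gibbs_density gibbs_density_pos
    by (simp add: emeasure_density nn_integral_eq_integral less_imp_le)
  then show "emeasure (gibbs_measure N lam h) (space (gibbs_measure N lam h)) = 1"
    using integral_gibbs_density by (simp add: gibbs_measure_eq)
qed

lemma objective_gibbs_measure:
  "ext_int (gibbs_measure N lam h) h + ereal lam * KL_div (gibbs_measure N lam h) N
     = ereal (- lam * ln partition)"
proof -
  have "AE \<xi> in N. ennreal (gibbs_density \<xi>) = RN_deriv N (gibbs_measure N lam h) \<xi>"
    unfolding gibbs_measure_eq by (rule RN_deriv_unique) simp_all
  then have AE_eq: "AE \<xi> in N. enn2real (RN_deriv N (gibbs_measure N lam h) \<xi>)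
      * ln (enn2real (RN_deriv N (gibbs_measure N lam h) \<xi>))
      = gibbs_density \<xi> * ln (gibbs_density \<xi>)"
    by eventually_elim (use gibbs_density_pos in \<open>metis enn2real_ennreal less_imp_le\<close>)
  have KL_eq: "KL_div (gibbs_measure N lam h) N
      = ext_int N (\<lambda>\<xi>. gibbs_density \<xi> * ln (gibbs_density \<xi>))"
    unfolding KL_div_def ext_int_def
    using integrable_cong_AE[OF _ _ AE_eq] integral_cong_AE[OF _ _ AE_eq] by simp
  \<comment> \<open>exp(-t/lam) t is bounded for t bounded below, hence so is the energy density\<close>
  have int_h: "integrable N (\<lambda>\<xi>. gibbs_density \<xi> * h \<xi>)"
  proof (rule integrable_const_bound[where B = "(lam + \<bar>c\<bar> * exp (\<bar>c\<bar> / lam)) / partition"])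
    show "AE \<xi> in N. norm (gibbs_density \<xi> * h \<xi>) \<le> (lam + \<bar>c\<bar> * exp (\<bar>c\<bar> / lam)) / partition"
      using abs_exp_neg_div_mult_le[OF lam_pos h_lower] partition_pos
      by (simp add: gibbs_density_def divide_right_mono abs_mult)
  qed simp
  have glng: "gibbs_density \<xi> * ln (gibbs_density \<xi>)
      = - (1 / lam) * (gibbs_density \<xi> * h \<xi>) - ln partition * gibbs_density \<xi>" for \<xi>
    unfolding ln_gibbs_density using lam_pos by (simp add: field_simps)
  have "integrable (gibbs_measure N lam h) h"
    unfolding gibbs_measure_eq using int_h gibbs_density_pos
    by (subst integrable_density) (auto simp: less_imp_le)
  moreover have "integral\<^sup>L (gibbs_measure N lam h) h = integral\<^sup>L N (\<lambda>\<xi>. gibbs_density \<xi> * h \<xi>)"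
    unfolding gibbs_measure_eq using gibbs_density_pos
    by (subst integral_density) (auto simp: less_imp_le)
  ultimately show ?thesis
    unfolding KL_eq ext_int_def glng
    using int_h integrable_gibbs_density integral_gibbs_density lam_pos by (simp add: field_simps)
qed

lemma measure_gibbs_measure:
  assumes "A \<in> sets N"
  shows "measure (gibbs_measure N lam h) A
    = integral\<^sup>L N (\<lambda>\<xi>. exp (- h \<xi> / lam) * indicator A \<xi>) / partition"
proof -
  have "measure (gibbs_measure N lam h) A = integral\<^sup>L (gibbs_measure N lam h) (indicator A)"
    using assms by (simp add: sets_gibbs_measure)
  also have "\<dots> = integral\<^sup>L N (\<lambda>\<xi>. gibbs_density \<xi> * indicator A \<xi>)"
    unfolding gibbs_measure_eq using gibbs_density_pos assms
    by (subst integral_density) (auto simp: less_imp_le)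
  finally show ?thesis by (simp add: gibbs_density_def)
qed

end

lemma prob_space_Phi: "prob_space (Phi x)"
  unfolding Phi_def by (rule prob_space_normal_density) simp

lemma sets_Phi[simp, measurable_cong]: "sets (Phi x) = sets borel"
  unfolding Phi_def by simp

lemma Phi_eq_distr: "Phi x = distr (Phi 0) borel (\<lambda>z. -x + z)"
proof -
  have "Phi x = density (distr lborel borel ((+) (-x))) (normal_density (-x) 1)"
    unfolding Phi_def lborel_distr_plus ..
  also have "\<dots> = distr (density lborel (\<lambda>z. normal_density (-x) 1 (-x + z))) borel ((+) (-x))"
    by (rule density_distr) auto
  also have "(\<lambda>z. normal_density (-x) 1 (-x + z)) = normal_density 0 1"
    by (auto simp: normal_density_def)
  finally show ?thesis unfolding Phi_def by simp
qed

lemma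
  fixes F :: "real \<Rightarrow> real"
  assumes [measurable]: "F \<in> borel_measurable borel"
  shows integral_Phi_shift: "integral\<^sup>L (Phi x) (\<lambda>\<zeta>. F (x + \<zeta>)) = integral\<^sup>L (Phi 0) F"
    and integrable_Phi_shift: "integrable (Phi x) (\<lambda>\<zeta>. F (x + \<zeta>)) \<longleftrightarrow> integrable (Phi 0) F"
  by (subst Phi_eq_distr, subst integral_distr integrable_distr_eq; simp)+

lemma integrable_Phi_exp_sq: "integrable (Phi 0) (\<lambda>z. exp (3 * z\<^sup>2 / 8))"
proof -
  \<comment> \<open>the weight turns the standard normal density into twice that of N(0,2)\<close>
  have "normal_density 0 1 z * exp (3 * z\<^sup>2 / 8) = 2 * normal_density 0 2 z" for z
  proof -
    have "sqrt (8::real) = 2 * sqrt 2" using real_sqrt_mult[of 4 2] by simp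
    then show ?thesis
      unfolding normal_density_def by (simp add: exp_add[symmetric] real_sqrt_mult)
  qed
  then show ?thesis
    unfolding Phi_def
    by (subst integrable_density) (auto simp: normal_density_nonneg intro: integrable_normal_density)
qed

lemma integrable_Phi_exp_neg_abs:
  assumes "b \<ge> 0"
  shows "integrable (Phi 0) (\<lambda>z. exp (a - b * \<bar>z\<bar>))"
  using assms
  by (intro finite_measure.integrable_const_bound[OF prob_space.finite_measure[OF prob_space_Phi],
        where B = "exp a"]) auto

lemma lipschitz_on_ln_of_ratio_le:
  fixes f :: "real \<Rightarrow> real"
  assumes pos: "\<And>x. f x > 0" and ratio: "\<And>x y. f y \<le> f x * exp (C * \<bar>x - y\<bar>)" and "C \<ge> 0"
  shows "C-lipschitz_on UNIV (\<lambda>x. ln (f x))"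
proof (rule lipschitz_onI)
  have ln_le: "ln (f y) \<le> ln (f x) + C * \<bar>x - y\<bar>" for x y
  proof -
    have "ln (f y) \<le> ln (f x * exp (C * \<bar>x - y\<bar>))"
      using ratio[of y x] pos[of x] pos[of y] by simp
    then show ?thesis using pos[of x] by (simp add: ln_mult)
  qed
  show "dist (ln (f x)) (ln (f y)) \<le> C * dist x y" for x y
    using ln_le[of x y] ln_le[of y x] by (simp add: dist_real_def abs_le_iff abs_minus_commute)
qed fact

locale gibbs_operator =
  fixes l :: "real \<Rightarrow> real" and Ll lam :: real and \<phi> :: "real \<Rightarrow> real"
  assumes l_bdd: "bdd_below (range l)" and l_lip: "Ll-lipschitz_on UNIV l"
    and lam_pos: "lam > 0"
    and phi_lip: "\<exists>L. L-lipschitz_on UNIV \<phi>" and phi_bdd: "bdd_below (range \<phi>)"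
begin

lemma continuous_on_phi: "continuous_on UNIV \<phi>"
  using phi_lip by (auto intro: lipschitz_on_continuous_on)

lemma phi_measurable[measurable]: "\<phi> \<in> borel_measurable borel"
  by (rule borel_measurable_continuous_onI[OF continuous_on_phi])

lemma l_measurable[measurable]: "l \<in> borel_measurable borel"
  by (rule borel_measurable_continuous_onI, rule lipschitz_on_continuous_on[OF l_lip])

lemma l_lipD: "\<bar>l a - l b\<bar> \<le> Ll * \<bar>a - b\<bar>"
  using lipschitz_onD[OF l_lip, of a b] by (simp add: dist_real_def)

lemma gibbs_potential_Phi:
  "gibbs_potential (Phi x) lam (Inf (range \<phi>) + Inf (range l)) (\<lambda>\<xi>. \<phi> (x + \<xi>) + l \<xi>)"
  unfolding gibbs_potential_def gibbs_potential_axioms_def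
  using prob_space_Phi lam_pos phi_bdd l_bdd by (auto intro: add_mono cInf_lower)

definition Z :: "real \<Rightarrow> real" where
  "Z x = integral\<^sup>L (Phi x) (gibbs_weight l lam \<phi> x)"

lemma Z_eq_partition:
  "Z x = gibbs_potential.partition (Phi x) lam (\<lambda>\<xi>. \<phi> (x + \<xi>) + l \<xi>)"
  unfolding Z_def gibbs_weight_def gibbs_potential.partition_def[OF gibbs_potential_Phi] ..

lemma mu_opt_eq_gibbs_measure:
  "mu_opt l lam \<phi> x = gibbs_measure (Phi x) lam (\<lambda>\<xi>. \<phi> (x + \<xi>) + l \<xi>)"
  unfolding mu_opt_def gibbs_measure_def gibbs_weight_def ..

lemma Z_pos: "Z x > 0"
  unfolding Z_eq_partition by (rule gibbs_potential.partition_pos[OF gibbs_potential_Phi])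

lemma integrable_gibbs_weight: "integrable (Phi x) (gibbs_weight l lam \<phi> x)"
  using gibbs_potential.integrable_exp[OF gibbs_potential_Phi] unfolding gibbs_weight_def .

lemma mu_opt_admissible: "mu_opt l lam \<phi> x \<in> admissible x"
  using gibbs_potential.prob_space_gibbs_measure[OF gibbs_potential_Phi]
    gibbs_potential.sets_gibbs_measure[OF gibbs_potential_Phi]
    gibbs_potential.absolutely_continuous_gibbs_measure[OF gibbs_potential_Phi]
  unfolding admissible_def mu_opt_eq_gibbs_measure by simp

lemma objective_mu_opt: "objective l lam \<phi> x (mu_opt l lam \<phi> x) = ereal (- lam * ln (Z x))"
  using gibbs_potential.objective_gibbs_measure[OF gibbs_potential_Phi]
  unfolding objective_def mu_opt_eq_gibbs_measure Z_eq_partition .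

lemma Mop_eq: "Mop l lam \<phi> x = ereal (- lam * ln (Z x))"
  unfolding Mop_def
proof (rule antisym)
  show "(INF mu\<in>admissible x. objective l lam \<phi> x mu) \<le> ereal (- lam * ln (Z x))"
    using mu_opt_admissible objective_mu_opt by (metis INF_lower)
  show "ereal (- lam * ln (Z x)) \<le> (INF mu\<in>admissible x. objective l lam \<phi> x mu)"
    using gibbs_potential.free_energy_le_objective[OF gibbs_potential_Phi]
    unfolding admissible_def objective_def Z_eq_partition by (auto intro: INF_greatest)
qed

lemma Z_eq_integral_Phi0: "Z x = integral\<^sup>L (Phi 0) (\<lambda>z. exp (- (\<phi> z + l (z - x)) / lam))"
  using integral_Phi_shift[of "\<lambda>z. exp (- (\<phi> z + l (z - x)) / lam)" x]
  unfolding Z_def gibbs_weight_def by simp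

lemma integrable_Phi0_weight: "integrable (Phi 0) (\<lambda>z. exp (- (\<phi> z + l (z - x)) / lam))"
  using integrable_Phi_shift[of "\<lambda>z. exp (- (\<phi> z + l (z - x)) / lam)" x]
    integrable_gibbs_weight[of x] unfolding gibbs_weight_def by simp

lemma Z_le_Z_mult_exp: "Z y \<le> Z x * exp (Ll / lam * \<bar>x - y\<bar>)"
proof -
  have "exp (- (\<phi> z + l (z - y)) / lam) \<le> exp (- (\<phi> z + l (z - x)) / lam) * exp (Ll / lam * \<bar>x - y\<bar>)"
    for z
  proof -
    have "l (z - x) - l (z - y) \<le> Ll * \<bar>x - y\<bar>"
      using l_lipD[of "z - x" "z - y"] by (simp add: abs_minus_commute)
    then have "(l (z - x) - l (z - y)) / lam \<le> Ll / lam * \<bar>x - y\<bar>"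
      using divide_right_mono[of _ _ lam] lam_pos by fastforce
    moreover have "- (\<phi> z + l (z - y)) / lam = - (\<phi> z + l (z - x)) / lam + (l (z - x) - l (z - y)) / lam"
      using lam_pos by (simp add: field_simps)
    ultimately have "- (\<phi> z + l (z - y)) / lam \<le> - (\<phi> z + l (z - x)) / lam + Ll / lam * \<bar>x - y\<bar>"
      by linarith
    then show ?thesis by (simp flip: exp_add)
  qed
  then have "Z y \<le> integral\<^sup>L (Phi 0) (\<lambda>z. exp (- (\<phi> z + l (z - x)) / lam) * exp (Ll / lam * \<bar>x - y\<bar>))"
    unfolding Z_eq_integral_Phi0
    by (intro integral_mono) (use integrable_Phi0_weight[of x] integrable_Phi0_weight[of y] in auto)
  then show ?thesis unfolding Z_eq_integral_Phi0 by simp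
qed

lemma lipschitz_Mop: "Ll-lipschitz_on UNIV (\<lambda>x. real_of_ereal (Mop l lam \<phi> x))"
proof -
  have "(Ll / lam)-lipschitz_on UNIV (\<lambda>x. ln (Z x))"
    using Z_pos Z_le_Z_mult_exp lipschitz_on_nonneg[OF l_lip] lam_pos
    by (intro lipschitz_on_ln_of_ratio_le) auto
  then have "(\<bar>- lam\<bar> * (Ll / lam))-lipschitz_on UNIV (\<lambda>x. - lam * ln (Z x))"
    by (rule lipschitz_on_cmult_real)
  then show ?thesis using lam_pos by (simp add: Mop_eq)
qed

lemma measure_mu_opt:
  assumes "A \<in> sets borel"
  shows "measure (mu_opt l lam \<phi> x) A
    = integral\<^sup>L (Phi x) (\<lambda>\<xi>. gibbs_weight l lam \<phi> x \<xi> * indicator A \<xi>) / Z x"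
  using gibbs_potential.measure_gibbs_measure[OF gibbs_potential_Phi, of A x] assms
  unfolding mu_opt_eq_gibbs_measure Z_eq_partition gibbs_weight_def by simp

lemma gibbs_weight_le_on_tail:
  assumes "0 \<le> t" and "t \<le> \<bar>x + \<xi>\<bar>"
  shows "gibbs_weight l lam \<phi> x \<xi>
    \<le> exp (- l (-x) / lam) * exp ((Ll / lam)\<^sup>2 - Inf (range \<phi>) / lam - t\<^sup>2 / 8) * exp (3 * (x + \<xi>)\<^sup>2 / 8)"
proof -
  define z a where "z = x + \<xi>" and "a = Ll / lam"
  have "Inf (range \<phi>) \<le> \<phi> z" using phi_bdd by (simp add: cInf_lower)
  moreover have "l (-x) - l \<xi> \<le> Ll * \<bar>z\<bar>"
    using l_lipD[of "-x" \<xi>] unfolding z_def by (simp add: abs_minus_commute add.commute)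
  ultimately have "- (\<phi> z + l \<xi>) / lam \<le> (- l (-x) - Inf (range \<phi>) + Ll * \<bar>z\<bar>) / lam"
    using lam_pos by (intro divide_right_mono) auto
  also have "\<dots> = - l (-x) / lam - Inf (range \<phi>) / lam + a * \<bar>z\<bar>"
    unfolding a_def using lam_pos by (simp add: field_simps)
  finally have exponent_le: "- (\<phi> z + l \<xi>) / lam \<le> - l (-x) / lam - Inf (range \<phi>) / lam + a * \<bar>z\<bar>" .
  have "0 \<le> (\<bar>z\<bar> / 2 - a)\<^sup>2" by simp
  then have "a * \<bar>z\<bar> \<le> a\<^sup>2 + z\<^sup>2 / 4" by (simp add: power2_eq_square field_simps)
  moreover have "t\<^sup>2 \<le> z\<^sup>2"
    using assms unfolding z_def by (metis power2_abs power_mono)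
  ultimately have "- (\<phi> z + l \<xi>) / lam
      \<le> - l (-x) / lam + (a\<^sup>2 - Inf (range \<phi>) / lam - t\<^sup>2 / 8) + 3 * z\<^sup>2 / 8"
    using exponent_le by linarith
  then show ?thesis
    unfolding gibbs_weight_def z_def a_def by (simp flip: exp_add)
qed

lemma gibbs_weight_ge:
  assumes "Lp-lipschitz_on UNIV \<phi>"
  shows "exp (- l (-x) / lam) * exp (- \<phi> 0 / lam - (Lp + Ll) / lam * \<bar>x + \<xi>\<bar>)
    \<le> gibbs_weight l lam \<phi> x \<xi>"
proof -
  define z where "z = x + \<xi>"
  have "\<phi> z - \<phi> 0 \<le> Lp * \<bar>z\<bar>"
    using lipschitz_onD[OF assms, of z 0] by (simp add: dist_real_def)
  moreover have "l \<xi> - l (-x) \<le> Ll * \<bar>z\<bar>"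
    using l_lipD[of \<xi> "-x"] unfolding z_def by (simp add: add.commute)
  ultimately have "(- l (-x) - \<phi> 0 - (Lp + Ll) * \<bar>z\<bar>) / lam \<le> - (\<phi> z + l \<xi>) / lam"
    using lam_pos by (intro divide_right_mono) (auto simp: algebra_simps)
  moreover have "(- l (-x) - \<phi> 0 - (Lp + Ll) * \<bar>z\<bar>) / lam
      = - l (-x) / lam + (- \<phi> 0 / lam - (Lp + Ll) / lam * \<bar>z\<bar>)"
    using lam_pos by (simp add: field_simps)
  ultimately show ?thesis
    unfolding gibbs_weight_def z_def by (simp flip: exp_add)
qed

lemma Z_ge:
  assumes "Lp-lipschitz_on UNIV \<phi>"
  shows "exp (- l (-x) / lam) * integral\<^sup>L (Phi 0) (\<lambda>z. exp (- \<phi> 0 / lam - (Lp + Ll) / lam * \<bar>z\<bar>))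
    \<le> Z x"
proof -
  let ?V = "\<lambda>z. exp (- \<phi> 0 / lam - (Lp + Ll) / lam * \<bar>z\<bar>)"
  have "integrable (Phi 0) ?V"
    using lipschitz_on_nonneg[OF assms] lipschitz_on_nonneg[OF l_lip] lam_pos
    by (intro integrable_Phi_exp_neg_abs) simp
  then have "exp (- l (-x) / lam) * integral\<^sup>L (Phi 0) ?V
      = integral\<^sup>L (Phi x) (\<lambda>\<xi>. exp (- l (-x) / lam) * ?V (x + \<xi>))"
    using integral_Phi_shift[of ?V x] by simp
  also have "\<dots> \<le> Z x"
    unfolding Z_def
    by (rule integral_mono) (use gibbs_weight_ge[OF assms] integrable_gibbs_weight
        integrable_Phi_shift[of ?V x] \<open>integrable (Phi 0) ?V\<close> in auto)
  finally show ?thesis .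
qed

lemma tail_integral_le:
  assumes "0 \<le> t"
  shows "integral\<^sup>L (Phi x) (\<lambda>\<xi>. gibbs_weight l lam \<phi> x \<xi> * indicator {\<xi>. \<bar>x + \<xi>\<bar> > t} \<xi>)
    \<le> exp (- l (-x) / lam) * exp ((Ll / lam)\<^sup>2 - Inf (range \<phi>) / lam - t\<^sup>2 / 8)
        * integral\<^sup>L (Phi 0) (\<lambda>z. exp (3 * z\<^sup>2 / 8))"
proof -
  let ?c = "exp (- l (-x) / lam) * exp ((Ll / lam)\<^sup>2 - Inf (range \<phi>) / lam - t\<^sup>2 / 8)"
  have "integral\<^sup>L (Phi x) (\<lambda>\<xi>. gibbs_weight l lam \<phi> x \<xi> * indicator {\<xi>. \<bar>x + \<xi>\<bar> > t} \<xi>)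
      \<le> integral\<^sup>L (Phi x) (\<lambda>\<xi>. ?c * exp (3 * (x + \<xi>)\<^sup>2 / 8))"
  proof (rule integral_mono)
    show "integrable (Phi x) (\<lambda>\<xi>. gibbs_weight l lam \<phi> x \<xi> * indicator {\<xi>. \<bar>x + \<xi>\<bar> > t} \<xi>)"
      using integrable_gibbs_weight by (intro integrable_real_mult_indicator) auto
    show "integrable (Phi x) (\<lambda>\<xi>. ?c * exp (3 * (x + \<xi>)\<^sup>2 / 8))"
      using integrable_Phi_shift[of "\<lambda>z. exp (3 * z\<^sup>2 / 8)" x] integrable_Phi_exp_sq by simp
    show "gibbs_weight l lam \<phi> x \<xi> * indicator {\<xi>. \<bar>x + \<xi>\<bar> > t} \<xi> \<le> ?c * exp (3 * (x + \<xi>)\<^sup>2 / 8)"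
      for \<xi>
      using gibbs_weight_le_on_tail[OF assms, of x \<xi>] by (cases "\<bar>x + \<xi>\<bar> > t") auto
  qed
  also have "\<dots> = ?c * integral\<^sup>L (Phi 0) (\<lambda>z. exp (3 * z\<^sup>2 / 8))"
    using integral_Phi_shift[of "\<lambda>z. exp (3 * z\<^sup>2 / 8)" x] by simp
  finally show ?thesis .
qed

lemma tail_bound:
  "\<exists>\<kappa>1>0. \<forall>x. \<forall>t\<ge>0.
     measure (mu_opt l lam \<phi> x) {\<xi>. \<bar>x + \<xi>\<bar> > t} \<le> 2 * \<kappa>1 * exp (- (1/8) * t\<^sup>2)"
proof -
  obtain Lp where Lp: "Lp-lipschitz_on UNIV \<phi>" using phi_lip by blast
  define C0 where "C0 = integral\<^sup>L (Phi 0) (\<lambda>z. exp (- \<phi> 0 / lam - (Lp + Ll) / lam * \<bar>z\<bar>))"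
  define C1 where "C1 = integral\<^sup>L (Phi 0) (\<lambda>z. exp (3 * z\<^sup>2 / 8))"
  define \<kappa>1 where "\<kappa>1 = exp ((Ll / lam)\<^sup>2 - Inf (range \<phi>) / lam) * C1 / (2 * C0)"
  have "C0 > 0"
    unfolding C0_def
    using lipschitz_on_nonneg[OF Lp] lipschitz_on_nonneg[OF l_lip] lam_pos
    by (intro prob_space.integral_pos[OF prob_space_Phi] integrable_Phi_exp_neg_abs) simp_all
  moreover have "C1 > 0"
    unfolding C1_def by (intro prob_space.integral_pos[OF prob_space_Phi] integrable_Phi_exp_sq) simp
  moreover have "measure (mu_opt l lam \<phi> x) {\<xi>. \<bar>x + \<xi>\<bar> > t} \<le> 2 * \<kappa>1 * exp (- (1/8) * t\<^sup>2)"
    if "0 \<le> t" for x t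
  proof -
    let ?e = "exp (- l (-x) / lam)"
    have "measure (mu_opt l lam \<phi> x) {\<xi>. \<bar>x + \<xi>\<bar> > t}
        = integral\<^sup>L (Phi x) (\<lambda>\<xi>. gibbs_weight l lam \<phi> x \<xi> * indicator {\<xi>. \<bar>x + \<xi>\<bar> > t} \<xi>) / Z x"
      by (rule measure_mu_opt) simp
    also have "\<dots> \<le> ?e * exp ((Ll / lam)\<^sup>2 - Inf (range \<phi>) / lam - t\<^sup>2 / 8) * C1 / (?e * C0)"
      by (rule frac_le) (use tail_integral_le[OF that] Z_ge[OF Lp] \<open>C0 > 0\<close> \<open>C1 > 0\<close>
          in \<open>auto simp: C0_def C1_def\<close>)
    also have "\<dots> = exp ((Ll / lam)\<^sup>2 - Inf (range \<phi>) / lam - t\<^sup>2 / 8) * C1 / C0"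
      by simp
    also have "exp ((Ll / lam)\<^sup>2 - Inf (range \<phi>) / lam - t\<^sup>2 / 8)
        = exp ((Ll / lam)\<^sup>2 - Inf (range \<phi>) / lam) * exp (- (1/8) * t\<^sup>2)"
      by (simp flip: exp_add)
    also have "\<dots> * C1 / C0 = 2 * \<kappa>1 * exp (- (1/8) * t\<^sup>2)"
      unfolding \<kappa>1_def using \<open>C0 > 0\<close> by simp
    finally show ?thesis .
  qed
  ultimately show ?thesis unfolding \<kappa>1_def by (intro exI[of _ \<kappa>1]) (auto simp: \<kappa>1_def)
qed
end

lemma ln_one_minus_ge:
  fixes d :: real
  assumes "0 \<le> d" and "d \<le> 1/2"
  shows "- 2 * d \<le> ln (1 - d)"
proof -
  have "d * d \<le> d * (1/2)" using assms by (intro mult_left_mono) auto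
  then show ?thesis using ln_one_minus_pos_lower_bound[OF assms] by (simp add: power2_eq_square)
qed

lemma Z_ge_of_le_on_interval:
  assumes S1: "gibbs_operator l Ll lam \<phi>1" and S2: "gibbs_operator l Ll lam \<phi>2"
    and close: "\<forall>y\<in>{-R..R}. \<phi>1 y \<le> \<phi>2 y + D"
  shows "exp (- D / lam) * (gibbs_operator.Z l lam \<phi>2 x
           * (1 - measure (mu_opt l lam \<phi>2 x) {\<xi>. \<bar>x + \<xi>\<bar> > R}))
         \<le> gibbs_operator.Z l lam \<phi>1 x"
proof -
  interpret S1: gibbs_operator l Ll lam \<phi>1 by fact
  interpret S2: gibbs_operator l Ll lam \<phi>2 by fact
  define A where "A = {\<xi>. \<bar>x + \<xi>\<bar> > R}"
  have A_sets[measurable]: "A \<in> sets borel" unfolding A_def by measurable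
  let ?w1 = "gibbs_weight l lam \<phi>1 x" and ?w2 = "gibbs_weight l lam \<phi>2 x"
  have int_w2A: "integrable (Phi x) (\<lambda>\<xi>. ?w2 \<xi> * indicator A \<xi>)"
    using S2.integrable_gibbs_weight by (intro integrable_real_mult_indicator) simp_all
  have w2A: "integral\<^sup>L (Phi x) (\<lambda>\<xi>. ?w2 \<xi> * indicator A \<xi>) = S2.Z x * measure (mu_opt l lam \<phi>2 x) A"
    using S2.measure_mu_opt[OF A_sets, of x] S2.Z_pos[of x] by simp
  have pointwise: "exp (- D / lam) * (?w2 \<xi> - ?w2 \<xi> * indicator A \<xi>) \<le> ?w1 \<xi>" for \<xi>
  proof (cases "\<xi> \<in> A")
    case False
    then have "x + \<xi> \<in> {-R..R}" unfolding A_def by auto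
    then have "\<phi>1 (x + \<xi>) \<le> \<phi>2 (x + \<xi>) + D" using close by blast
    then have "(- D + - (\<phi>2 (x + \<xi>) + l \<xi>)) / lam \<le> - (\<phi>1 (x + \<xi>) + l \<xi>) / lam"
      using S1.lam_pos by (intro divide_right_mono) auto
    then have "- D / lam + - (\<phi>2 (x + \<xi>) + l \<xi>) / lam \<le> - (\<phi>1 (x + \<xi>) + l \<xi>) / lam"
      by (simp only: add_divide_distrib)
    then show ?thesis using False unfolding gibbs_weight_def by (simp flip: exp_add)
  qed (simp add: gibbs_weight_def)
  have "integral\<^sup>L (Phi x) (\<lambda>\<xi>. exp (- D / lam) * (?w2 \<xi> - ?w2 \<xi> * indicator A \<xi>))
      = exp (- D / lam) * (S2.Z x - integral\<^sup>L (Phi x) (\<lambda>\<xi>. ?w2 \<xi> * indicator A \<xi>))"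
    unfolding S2.Z_def
    using S2.integrable_gibbs_weight int_w2A by simp
  then have "exp (- D / lam) * (S2.Z x * (1 - measure (mu_opt l lam \<phi>2 x) A))
      = integral\<^sup>L (Phi x) (\<lambda>\<xi>. exp (- D / lam) * (?w2 \<xi> - ?w2 \<xi> * indicator A \<xi>))"
    unfolding w2A by (simp add: algebra_simps)
  also have "\<dots> \<le> S1.Z x"
    unfolding S1.Z_def
    by (rule integral_mono) (use S2.integrable_gibbs_weight int_w2A S1.integrable_gibbs_weight pointwise in auto)
  finally show ?thesis unfolding A_def .
qed

lemma Mop_le_of_le_on_interval:
  assumes S1: "gibbs_operator l Ll lam \<phi>1" and S2: "gibbs_operator l Ll lam \<phi>2"
    and close: "\<forall>y\<in>{-R..R}. \<phi>1 y \<le> \<phi>2 y + D"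
    and tail: "measure (mu_opt l lam \<phi>2 x) {\<xi>. \<bar>x + \<xi>\<bar> > R} \<le> d" and "d \<le> 1/2"
  shows "real_of_ereal (Mop l lam \<phi>1 x) \<le> real_of_ereal (Mop l lam \<phi>2 x) + D + 2 * lam * d"
proof -
  interpret S1: gibbs_operator l Ll lam \<phi>1 by fact
  interpret S2: gibbs_operator l Ll lam \<phi>2 by fact
  have "0 \<le> d" using tail measure_nonneg order_trans by blast
  have "exp (- D / lam) * (S2.Z x * (1 - d))
      \<le> exp (- D / lam) * (S2.Z x * (1 - measure (mu_opt l lam \<phi>2 x) {\<xi>. \<bar>x + \<xi>\<bar> > R}))"
    using tail S2.Z_pos[of x] by (intro mult_left_mono) auto
  also have "\<dots> \<le> S1.Z x" by (rule Z_ge_of_le_on_interval[OF S1 S2 close])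
  finally have "ln (exp (- D / lam) * (S2.Z x * (1 - d))) \<le> ln (S1.Z x)"
    using S2.Z_pos[of x] S1.Z_pos[of x] \<open>d \<le> 1/2\<close> by (subst ln_le_cancel_iff) auto
  then have "- D / lam + ln (S2.Z x) + ln (1 - d) \<le> ln (S1.Z x)"
    using S2.Z_pos[of x] \<open>d \<le> 1/2\<close> by (simp add: ln_mult)
  then have "- D / lam + ln (S2.Z x) - 2 * d \<le> ln (S1.Z x)"
    using ln_one_minus_ge[OF \<open>0 \<le> d\<close> \<open>d \<le> 1/2\<close>] by linarith
  then have "lam * (- D / lam + ln (S2.Z x) - 2 * d) \<le> lam * ln (S1.Z x)"
    using S1.lam_pos by (intro mult_left_mono) auto
  then show ?thesis
    using S1.lam_pos unfolding S1.Mop_eq S2.Mop_eq by (simp add: algebra_simps)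
qed

lemma vanishing_error_extension:
  fixes f :: "'a \<Rightarrow> real" and D e :: "real \<Rightarrow> real"
  assumes "R0 > 0" and bound: "\<And>R x. R \<ge> R0 \<Longrightarrow> f x \<le> D R + e R"
    and D_nonneg: "\<And>R. R > 0 \<Longrightarrow> D R \<ge> 0"
    and e_pos: "\<And>R. e R > 0" and e_lim: "(e \<longlongrightarrow> 0) at_top"
  shows "\<exists>E. (\<forall>R>0. E R > 0) \<and> (E \<longlongrightarrow> 0) at_top \<and> (\<forall>R>0. \<forall>x. f x \<le> D R + E R)"
proof -
  \<comment> \<open>below R0 the bound at R0 still holds, as D is nonnegative\<close>
  define E where "E R = (if R \<ge> R0 then e R else D R0 + e R0)" for R
  have "\<forall>\<^sub>F R in at_top. e R = E R"
    unfolding E_def eventually_at_top_linorder by auto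
  then have "(E \<longlongrightarrow> 0) at_top" by (rule Lim_transform_eventually[OF e_lim])
  moreover have "E R > 0" if "R > 0" for R
    unfolding E_def using e_pos D_nonneg[of R0] \<open>R0 > 0\<close> by (simp add: add_nonneg_pos)
  moreover have "f x \<le> D R + E R" if "R > 0" for R x
    using bound[of R x] bound[of R0 x] D_nonneg[OF that] unfolding E_def by auto
  ultimately show ?thesis by blast
qed

lemma abs_le_SUP_abs_interval:
  fixes f :: "real \<Rightarrow> real"
  assumes "continuous_on {a..b} f" and "y \<in> {a..b}"
  shows "\<bar>f y\<bar> \<le> (SUP z\<in>{a..b}. \<bar>f z\<bar>)"
proof (rule cSUP_upper[OF assms(2)])
  show "bdd_above ((\<lambda>z. \<bar>f z\<bar>) ` {a..b})"
    using assms(1)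
    by (intro bounded_imp_bdd_above compact_imp_bounded compact_continuous_image continuous_intros)
      auto
qed

lemma Mop_diff_le_sup_diff_plus_error:
  assumes S1: "gibbs_operator l Ll lam \<phi>1" and S2: "gibbs_operator l Ll lam \<phi>2"
  shows "\<exists>E :: real \<Rightarrow> real. (\<forall>R>0. E R > 0) \<and> (E \<longlongrightarrow> 0) at_top \<and>
    (\<forall>R>0. \<forall>x. \<bar>real_of_ereal (Mop l lam \<phi>1 x) - real_of_ereal (Mop l lam \<phi>2 x)\<bar>
                \<le> (SUP y\<in>{-R..R}. \<bar>\<phi>1 y - \<phi>2 y\<bar>) + E R)"
proof -
  interpret S1: gibbs_operator l Ll lam \<phi>1 by fact
  interpret S2: gibbs_operator l Ll lam \<phi>2 by fact
  obtain \<kappa>a \<kappa>b where "\<kappa>a > 0" "\<kappa>b > 0"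
    and tail_a: "\<And>x t. 0 \<le> t \<Longrightarrow>
      measure (mu_opt l lam \<phi>1 x) {\<xi>. \<bar>x + \<xi>\<bar> > t} \<le> 2 * \<kappa>a * exp (- (1/8) * t\<^sup>2)"
    and tail_b: "\<And>x t. 0 \<le> t \<Longrightarrow>
      measure (mu_opt l lam \<phi>2 x) {\<xi>. \<bar>x + \<xi>\<bar> > t} \<le> 2 * \<kappa>b * exp (- (1/8) * t\<^sup>2)"
    using S1.tail_bound S2.tail_bound by blast
  define \<delta> where "\<delta> R = 2 * max \<kappa>a \<kappa>b * exp (- (1/8) * R\<^sup>2)" for R
  have tail1: "measure (mu_opt l lam \<phi>1 x) {\<xi>. \<bar>x + \<xi>\<bar> > R} \<le> \<delta> R"
    and tail2: "measure (mu_opt l lam \<phi>2 x) {\<xi>. \<bar>x + \<xi>\<bar> > R} \<le> \<delta> R" if "0 \<le> R" for x R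
    using tail_a[OF that, of x] tail_b[OF that, of x] unfolding \<delta>_def
    by (auto intro: order_trans mult_right_mono)
  have "((\<lambda>R::real. exp (- (1/8) * R\<^sup>2)) \<longlongrightarrow> 0) at_top" by real_asymp
  then have \<delta>_lim: "(\<delta> \<longlongrightarrow> 0) at_top" unfolding \<delta>_def by (rule tendsto_mult_right_zero)
  then obtain R0 where R0: "\<And>R. R \<ge> R0 \<Longrightarrow> \<delta> R < 1/2"
    using order_tendstoD(2)[OF \<delta>_lim, of "1/2"] by (auto simp: eventually_at_top_linorder)
  define D where "D R = (SUP y\<in>{-R..R}. \<bar>\<phi>1 y - \<phi>2 y\<bar>)" for R
  have diff_le_D: "\<bar>\<phi>1 y - \<phi>2 y\<bar> \<le> D R" if "y \<in> {-R..R}" for y R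
    unfolding D_def using S1.continuous_on_phi S2.continuous_on_phi that
    by (intro abs_le_SUP_abs_interval continuous_intros) (auto intro: continuous_on_subset)
  have D_nonneg: "D R \<ge> 0" if "R > 0" for R
    using diff_le_D[of 0 R] that by simp
  have bound: "\<bar>real_of_ereal (Mop l lam \<phi>1 x) - real_of_ereal (Mop l lam \<phi>2 x)\<bar> \<le> D R + 2 * lam * \<delta> R"
    if "R \<ge> max R0 1" for R x
  proof -
    have close12: "\<forall>y\<in>{-R..R}. \<phi>1 y \<le> \<phi>2 y + D R" and close21: "\<forall>y\<in>{-R..R}. \<phi>2 y \<le> \<phi>1 y + D R"
      using diff_le_D[of _ R] by (force simp: abs_le_iff)+
    have "0 \<le> R" "R0 \<le> R" using that by auto
    show ?thesis
      using Mop_le_of_le_on_interval[OF S1 S2 close12 tail2[OF \<open>0 \<le> R\<close>, of x] less_imp_le[OF R0]]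
        Mop_le_of_le_on_interval[OF S2 S1 close21 tail1[OF \<open>0 \<le> R\<close>, of x] less_imp_le[OF R0]]
        \<open>R0 \<le> R\<close>
      by (simp add: abs_le_iff)
  qed
  show ?thesis
    unfolding D_def[symmetric]
  proof (rule vanishing_error_extension[of "max R0 1"])
    show "\<And>R. 0 < 2 * lam * \<delta> R"
      unfolding \<delta>_def using S1.lam_pos \<open>\<kappa>a > 0\<close> by (simp add: max_def)
    show "((\<lambda>R. 2 * lam * \<delta> R) \<longlongrightarrow> 0) at_top"
      using tendsto_mult_right_zero[OF \<delta>_lim] by simp
  qed (use bound D_nonneg in auto)
qed

theorem lemma3p2:
  fixes l :: "real \<Rightarrow> real" and K Ll lam :: real and \<phi> \<phi>1 \<phi>2 :: "real \<Rightarrow> real"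
  assumes K_pos: "K > 0"
    and l_ge: "\<forall>x. K \<le> l x" and l_0: "l 0 = K"
    and l_sub: "\<forall>x y. l x + l y \<ge> l (x + y) + K"
    and l_coercive: "filterlim l at_top at_infinity"
    and Ll_pos: "Ll > 0" and l_lip: "Ll-lipschitz_on UNIV l"
    and lam_pos: "lam > 0"
    and phi_lip: "\<exists>L. L-lipschitz_on UNIV \<phi>" and phi_bdd: "bdd_below (range \<phi>)"
    and phi1_lip: "\<exists>L. L-lipschitz_on UNIV \<phi>1" and phi1_bdd: "bdd_below (range \<phi>1)"
    and phi2_lip: "\<exists>L. L-lipschitz_on UNIV \<phi>2" and phi2_bdd: "bdd_below (range \<phi>2)"
  shows "(\<forall>x. Mop l lam \<phi> x =
            ereal (- lam * ln (integral\<^sup>L (Phi x) (\<lambda>\<zeta>. exp (- (\<phi> (x + \<zeta>) + l \<zeta>) / lam)))))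
    \<and> Ll-lipschitz_on UNIV (\<lambda>x. real_of_ereal (Mop l lam \<phi> x))
    \<and> (\<exists>\<kappa>1 \<kappa>2. \<kappa>1 > 0 \<and> \<kappa>2 > 0 \<and>
         (\<forall>x. mu_opt l lam \<phi> x \<in> admissible x
            \<and> (\<forall>t\<ge>0. measure (mu_opt l lam \<phi> x) {\<xi>. \<bar>x + \<xi>\<bar> > t}
                       \<le> 2 * \<kappa>1 * exp (- \<kappa>2 * t\<^sup>2))
            \<and> Mop l lam \<phi> x = objective l lam \<phi> x (mu_opt l lam \<phi> x)))
    \<and> (\<exists>E :: real \<Rightarrow> real. (\<forall>R>0. E R > 0) \<and> (E \<longlongrightarrow> 0) at_top \<and>
         (\<forall>R>0. \<forall>x. \<bar>real_of_ereal (Mop l lam \<phi>1 x) - real_of_ereal (Mop l lam \<phi>2 x)\<bar>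
                    \<le> (SUP y\<in>{-R..R}. \<bar>\<phi>1 y - \<phi>2 y\<bar>) + E R))"
proof -
  \<comment> \<open>of the hypotheses on l only the lower bound and the Lipschitz bound are needed\<close>
  have "bdd_below (range l)" using l_ge by (auto intro: bdd_belowI2)
  then have operator: "gibbs_operator l Ll lam \<psi>"
    if "\<exists>L. L-lipschitz_on UNIV \<psi>" and "bdd_below (range \<psi>)" for \<psi>
    using that l_lip lam_pos by unfold_locales
  interpret gibbs_operator l Ll lam \<phi> by (rule operator[OF phi_lip phi_bdd])
  obtain \<kappa>1 where "\<kappa>1 > 0"
    and "\<forall>x. \<forall>t\<ge>0.
      measure (mu_opt l lam \<phi> x) {\<xi>. \<bar>x + \<xi>\<bar> > t} \<le> 2 * \<kappa>1 * exp (- (1/8) * t\<^sup>2)"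
    using tail_bound by blast
  then have "\<exists>\<kappa>1 \<kappa>2. \<kappa>1 > 0 \<and> \<kappa>2 > 0 \<and>
         (\<forall>x. mu_opt l lam \<phi> x \<in> admissible x
            \<and> (\<forall>t\<ge>0. measure (mu_opt l lam \<phi> x) {\<xi>. \<bar>x + \<xi>\<bar> > t}
                       \<le> 2 * \<kappa>1 * exp (- \<kappa>2 * t\<^sup>2))
            \<and> Mop l lam \<phi> x = objective l lam \<phi> x (mu_opt l lam \<phi> x))"
    using mu_opt_admissible objective_mu_opt Mop_eq by (intro exI[of _ \<kappa>1] exI[of _ "1/8"]) auto
  moreover have "\<forall>x. Mop l lam \<phi> x =
      ereal (- lam * ln (integral\<^sup>L (Phi x) (\<lambda>\<zeta>. exp (- (\<phi> (x + \<zeta>) + l \<zeta>) / lam))))"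
    using Mop_eq unfolding Z_def gibbs_weight_def[abs_def] by blast
  ultimately show ?thesis
    using lipschitz_Mop Mop_diff_le_sup_diff_plus_error[OF operator operator]
      phi1_lip phi1_bdd phi2_lip phi2_bdd by blast
qed

end
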